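(* Let $n\ge2$, $1\le m<n$, and write $n=qm+r$ with integers $q\ge1$ and $0<r\le m$. For each subset $I\subset\{1,\ldots,m\}$ with $|I|=r$, the polynomial $F_I$ on $\mathfrak q^*=\mathfrak{sl}_n\oplus m\mathbb C^n$ defined by $$F_I(A,v)=\det\bigl(v\,|\,Av\,|\,\cdots\,|\,A^{q-1}v\,|\,A^q v_I\bigr),\qquad A\in\mathfrak{sl}_n,\ v\in m\mathbb C^n,$$ is invariant under $\exp(V)$ (equivalently under the abelian ideal $V$ of $\mathfrak q$). Here $v$ is viewed as an $n\times m$ matrix, $v_I$ is the $n\times r$ submatrix of $v$ formed by the columns with indices in $I$, and the argument of $\det$ is the $n\times n$ matrix obtained by concatenating the indicated blocks.
   Context: $\mathfrak q=\mathfrak{sl}_n\ltimes V$ with $V=m(\mathbb C^n)^*$ ($m$ copies of the dual defining representation), an abelian ideal; $Q=\mathrm{SL}_n\ltimes\exp(V)$. Identify $\mathfrak{sl}_n\cong\mathfrak{sl}_n^*$ via the trace form, so $\mathfrak q^*=\mathfrak{sl}_n\oplus V^*$ with $V^*=m\mathbb C^n$. Each $F_I$ is clearly $\mathrm{SL}_n$-invariant. *)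

theory Defs
  imports Complex_Main "Jordan_Normal_Form.Determinant"
begin

text \<open>Matrices are Jordan_Normal_Form matrices over the complex numbers; indices are 0-based,
so the column index set {1,...,m} of the paper becomes {0..<m}.\<close>

definition mtrace :: "complex mat \<Rightarrow> complex" where
  "mtrace A = (\<Sum>i<dim_row A. A $$ (i, i))"

text \<open>sl_n as traceless n x n complex matrices (identified with its dual via the trace form).\<close>
definition sl :: "nat \<Rightarrow> complex mat set" where
  "sl n = {A \<in> carrier_mat n n. mtrace A = 0}"

text \<open>Coadjoint action of exp(x), x \<in> V = m (C^n)^* (an m x n matrix whose rows are covectors),
on q^* = sl_n \<oplus> m C^n, an element (A, v) with v an n x m matrix.
With pairing <(A,v),(Y,xi)> = tr(A Y) + tr(xi v), and the bracket [x,Y] = x Y for x in V, Y in sl_n,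
one gets Ad^*(exp x)(A,v) = (A - v x + (tr(v x)/n) I, v).\<close>
definition coadj_exp_V :: "nat \<Rightarrow> complex mat \<Rightarrow> complex mat \<times> complex mat \<Rightarrow> complex mat \<times> complex mat" where
  "coadj_exp_V n x Av = (case Av of (A, v) \<Rightarrow>
     (A - v * x + (mtrace (v * x) / of_nat n) \<cdot>\<^sub>m 1\<^sub>m n, v))"

text \<open>F_I(A,v) = det(v | A v | ... | A^(q-1) v | A^q v_I); the columns of v_I are taken in increasing order.\<close>
definition F_I :: "nat \<Rightarrow> nat \<Rightarrow> nat \<Rightarrow> nat set \<Rightarrow> complex mat \<times> complex mat \<Rightarrow> complex" where
  "F_I n m q I Av = (case Av of (A, v) \<Rightarrow>
     det (mat n n (\<lambda>(i, j).
       if j < q * m then ((A ^\<^sub>m (j div m)) * v) $$ (i, j mod m)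
       else ((A ^\<^sub>m q) * v) $$ (i, sorted_list_of_set I ! (j - q * m)))))"

end

theory Submission
  imports Defs
begin

text \<open>The action of \<open>exp x\<close> fixes \<open>v\<close> and replaces \<open>A\<close> by \<open>A' = A - v x + c I\<close>.
  By induction on \<open>k\<close>, each column of \<open>A'\<^sup>k v\<close> differs from the same column of \<open>A\<^sup>k v\<close>
  by a linear combination of the columns of \<open>v, A v, \<dots>, A\<^sup>k\<^sup>-\<^sup>1 v\<close>: the term \<open>- v x\<close>
  contributes columns of \<open>v\<close>, and the scalar \<open>c\<close> only rescales the previous step. In the matrix
  defining \<open>F_I\<close> the columns taken from \<open>A\<^sup>k v\<close> come after all columns of
  \<open>v, \<dots>, A\<^sup>k\<^sup>-\<^sup>1 v\<close>, so replacing \<open>A\<close> by \<open>A'\<close> adds to every column a combination of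
  earlier ones and leaves the determinant unchanged. Neither \<open>tr A = 0\<close> nor the value of \<open>c\<close>
  is needed, and the argument works over any commutative ring.\<close>

lemma index_mult_mat_sum:
  assumes "A \<in> carrier_mat a b" "B \<in> carrier_mat b c" "i < a" "j < c"
  shows "(A * B) $$ (i, j) = (\<Sum>p<b. A $$ (i, p) * B $$ (p, j))"
  using assms by (auto simp: scalar_prod_def lessThan_atLeast0 intro!: sum.cong)

lemma pow_mat_Suc_left:
  assumes "A \<in> carrier_mat n n"
  shows "A ^\<^sub>m Suc k = A * A ^\<^sub>m k"
proof (induction k)
  case 0
  then show ?case using assms by simp
next
  case (Suc k)
  have "A ^\<^sub>m Suc (Suc k) = (A * A ^\<^sub>m k) * A" using Suc by simp
  also have "\<dots> = A * (A ^\<^sub>m k * A)" using assms by (simp add: assoc_mult_mat[of _ n n _ n _ n])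
  finally show ?case by simp
qed

lemma pow_mat_Suc_mult_left:
  assumes "A \<in> carrier_mat n n" "v \<in> carrier_mat n m"
  shows "A ^\<^sub>m Suc k * v = A * (A ^\<^sub>m k * v)"
proof -
  have "A ^\<^sub>m Suc k * v = (A * A ^\<^sub>m k) * v" by (simp only: pow_mat_Suc_left[OF assms(1)])
  also have "\<dots> = A * (A ^\<^sub>m k * v)" by (rule assoc_mult_mat[of A n n _ n v m]) (use assms in auto)
  finally show ?thesis .
qed

lemma sum_lessThan_mult_div_mod:
  fixes m :: nat
  shows "(\<Sum>i<b * m. f (i div m) (i mod m)) = (\<Sum>l<b. \<Sum>t<m. f l t)"
proof -
  have "(\<Sum>i<b * m. f (i div m) (i mod m)) = (\<Sum>l<b. \<Sum>i\<in>{l * m..<l * m + m}. f (i div m) (i mod m))"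
    by (rule sum.nat_group[symmetric])
  also have "\<dots> = (\<Sum>l<b. \<Sum>t<m. f l t)"
  proof (rule sum.cong[OF refl])
    fix l
    have "(\<Sum>i\<in>{l * m..<l * m + m}. f (i div m) (i mod m))
        = (\<Sum>t\<in>{0..<m}. f ((t + l * m) div m) ((t + l * m) mod m))"
      using sum.shift_bounds_nat_ivl[of "\<lambda>i. f (i div m) (i mod m)" 0 "l * m" m]
      by (simp only: add_0 add.commute)
    also have "\<dots> = (\<Sum>t<m. f l t)"
      by (intro sum.cong) auto
    finally show "(\<Sum>i\<in>{l * m..<l * m + m}. f (i div m) (i mod m)) = (\<Sum>t<m. f l t)" .
  qed
  finally show ?thesis .
qed

text \<open>Adding to every column a linear combination of the preceding ones amounts to multiplying
  on the right by a unipotent upper triangular matrix.\<close>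
lemma det_add_earlier_columns:
  fixes M M' :: "'a :: comm_ring_1 mat"
  assumes M: "M \<in> carrier_mat n n" and M': "M' \<in> carrier_mat n n"
    and cols: "\<And>j. j < n \<Longrightarrow> \<exists>a. \<forall>r<n. M' $$ (r, j) = M $$ (r, j) + (\<Sum>i<j. a i * M $$ (r, i))"
  shows "det M' = det M"
proof -
  obtain a where a: "\<And>j r. j < n \<Longrightarrow> r < n \<Longrightarrow> M' $$ (r, j) = M $$ (r, j) + (\<Sum>i<j. a j i * M $$ (r, i))"
    using cols by metis
  define U where "U = mat n n (\<lambda>(i, j). if i = j then 1 else if i < j then a j i else 0)"
  have U: "U \<in> carrier_mat n n" unfolding U_def by simp
  have "upper_triangular U" unfolding U_def upper_triangular_def by auto
  then have "det U = prod_list (diag_mat U)" by (rule det_upper_triangular[OF _ U])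
  also have "\<dots> = 1" unfolding prod_list_diag_prod using U by (simp add: U_def)
  finally have det_U: "det U = 1" .
  have "M * U = M'"
  proof (rule eq_matI)
    fix r j assume "r < dim_row M'" and "j < dim_col M'"
    then have r: "r < n" and j: "j < n" using M' by auto
    have "(M * U) $$ (r, j) = (\<Sum>p<n. M $$ (r, p) * U $$ (p, j))"
      by (rule index_mult_mat_sum[OF M U r j])
    also have "\<dots> = (\<Sum>p<n. (if p = j then M $$ (r, j) else 0) + (if p < j then a j p * M $$ (r, p) else 0))"
      by (rule sum.cong) (auto simp: U_def j)
    also have "\<dots> = M $$ (r, j) + (\<Sum>p\<in>{..<n} \<inter> {p. p < j}. a j p * M $$ (r, p))"
      by (simp add: sum.distrib j sum.inter_restrict)
    also have "{..<n} \<inter> {p. p < j} = {..<j}" using j by auto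
    finally show "(M * U) $$ (r, j) = M' $$ (r, j)" using a[OF j r] by simp
  qed (use M M' U in auto)
  then show ?thesis using det_mult[OF M U] det_U by simp
qed

definition in_krylov_span :: "nat \<Rightarrow> nat \<Rightarrow> 'a :: semiring_1 mat \<Rightarrow> 'a mat \<Rightarrow> nat \<Rightarrow> (nat \<Rightarrow> 'a) \<Rightarrow> bool" where
  "in_krylov_span n m A v k w \<longleftrightarrow>
     (\<exists>d. \<forall>r<n. w r = (\<Sum>l<k. \<Sum>t<m. d l t * (A ^\<^sub>m l * v) $$ (r, t)))"

lemma in_krylov_span_cong:
  assumes "in_krylov_span n m A v k w" "\<And>r. r < n \<Longrightarrow> w r = w' r"
  shows "in_krylov_span n m A v k w'"
proof -
  obtain d where "\<forall>r<n. w r = (\<Sum>l<k. \<Sum>t<m. d l t * (A ^\<^sub>m l * v) $$ (r, t))"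
    using assms(1) unfolding in_krylov_span_def by blast
  then show ?thesis unfolding in_krylov_span_def using assms(2) by (intro exI[of _ d]) auto
qed

lemma in_krylov_span_mono:
  assumes "in_krylov_span n m A v k w" "k \<le> k'"
  shows "in_krylov_span n m A v k' w"
proof -
  obtain d where d: "\<And>r. r < n \<Longrightarrow> w r = (\<Sum>l<k. \<Sum>t<m. d l t * (A ^\<^sub>m l * v) $$ (r, t))"
    using assms(1) unfolding in_krylov_span_def by blast
  define d' where "d' l t = (if l < k then d l t else 0)" for l t
  have "(\<Sum>l<k. \<Sum>t<m. d l t * (A ^\<^sub>m l * v) $$ (r, t)) = (\<Sum>l<k'. \<Sum>t<m. d' l t * (A ^\<^sub>m l * v) $$ (r, t))"
    for r
  proof -
    have "(\<Sum>l<k'. \<Sum>t<m. d' l t * (A ^\<^sub>m l * v) $$ (r, t)) = (\<Sum>l<k. \<Sum>t<m. d' l t * (A ^\<^sub>m l * v) $$ (r, t))"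
      using assms(2) by (intro sum.mono_neutral_right) (simp_all add: d'_def)
    also have "\<dots> = (\<Sum>l<k. \<Sum>t<m. d l t * (A ^\<^sub>m l * v) $$ (r, t))"
      by (intro sum.cong refl) (simp add: d'_def)
    finally show ?thesis ..
  qed
  then show ?thesis unfolding in_krylov_span_def using d by (intro exI[of _ d']) simp
qed

lemma in_krylov_span_add:
  assumes "in_krylov_span n m A v k w1" "in_krylov_span n m A v k w2"
  shows "in_krylov_span n m A v k (\<lambda>r. w1 r + w2 r)"
proof -
  obtain d1 d2 where
    "\<And>r. r < n \<Longrightarrow> w1 r = (\<Sum>l<k. \<Sum>t<m. d1 l t * (A ^\<^sub>m l * v) $$ (r, t))"
    "\<And>r. r < n \<Longrightarrow> w2 r = (\<Sum>l<k. \<Sum>t<m. d2 l t * (A ^\<^sub>m l * v) $$ (r, t))"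
    using assms unfolding in_krylov_span_def by blast
  then show ?thesis unfolding in_krylov_span_def
    by (intro exI[of _ "\<lambda>l t. d1 l t + d2 l t"]) (simp add: sum.distrib distrib_right)
qed

lemma in_krylov_span_smult:
  assumes "in_krylov_span n m A v k w"
  shows "in_krylov_span n m A v k (\<lambda>r. c * w r)"
proof -
  obtain d where "\<And>r. r < n \<Longrightarrow> w r = (\<Sum>l<k. \<Sum>t<m. d l t * (A ^\<^sub>m l * v) $$ (r, t))"
    using assms unfolding in_krylov_span_def by blast
  then show ?thesis unfolding in_krylov_span_def
    by (intro exI[of _ "\<lambda>l t. c * d l t"]) (simp add: sum_distrib_left mult.assoc)
qed

lemma in_krylov_span_column:
  assumes "l < k" "t < m"
  shows "in_krylov_span n m A v k (\<lambda>r. (A ^\<^sub>m l * v) $$ (r, t))"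
  unfolding in_krylov_span_def
proof (intro exI allI impI)
  fix r
  let ?d = "\<lambda>l' t'. if l' = l \<and> t' = t then 1 else 0"
  have "(\<Sum>l'<k. \<Sum>t'<m. ?d l' t' * (A ^\<^sub>m l' * v) $$ (r, t'))
      = (\<Sum>l'<k. if l' = l then (A ^\<^sub>m l * v) $$ (r, t) else 0)"
    using assms(2) by (intro sum.cong) (auto simp: if_distrib[of "\<lambda>z. z * _"] cong: if_cong)
  also have "\<dots> = (A ^\<^sub>m l * v) $$ (r, t)" using assms(1) by simp
  finally show "(A ^\<^sub>m l * v) $$ (r, t) = (\<Sum>l'<k. \<Sum>t'<m. ?d l' t' * (A ^\<^sub>m l' * v) $$ (r, t'))" ..
qed

lemma in_krylov_span_combination_of_columns:
  assumes "0 < k"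
  shows "in_krylov_span n m A v k (\<lambda>r. \<Sum>t<m. e t * (A ^\<^sub>m 0 * v) $$ (r, t))"
  unfolding in_krylov_span_def
proof (intro exI allI impI)
  fix r
  have "(\<Sum>l<k. \<Sum>t<m. (if l = 0 then e t else 0) * (A ^\<^sub>m l * v) $$ (r, t))
      = (\<Sum>l<k. if l = 0 then \<Sum>t<m. e t * (A ^\<^sub>m 0 * v) $$ (r, t) else 0)"
    by (intro sum.cong) auto
  then show "(\<Sum>t<m. e t * (A ^\<^sub>m 0 * v) $$ (r, t))
      = (\<Sum>l<k. \<Sum>t<m. (if l = 0 then e t else 0) * (A ^\<^sub>m l * v) $$ (r, t))"
    using assms by simp
qed

lemma in_krylov_span_mult:
  fixes A v :: "'a :: comm_semiring_1 mat"
  assumes A: "A \<in> carrier_mat n n" and v: "v \<in> carrier_mat n m"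
    and w: "in_krylov_span n m A v k w"
  shows "in_krylov_span n m A v (Suc k) (\<lambda>r. \<Sum>p<n. A $$ (r, p) * w p)"
proof -
  obtain d where d: "\<And>r. r < n \<Longrightarrow> w r = (\<Sum>l<k. \<Sum>t<m. d l t * (A ^\<^sub>m l * v) $$ (r, t))"
    using w unfolding in_krylov_span_def by blast
  define d' where "d' l t = (if l = 0 then 0 else d (l - 1) t)" for l t
  have "(\<Sum>p<n. A $$ (r, p) * w p) = (\<Sum>l<Suc k. \<Sum>t<m. d' l t * (A ^\<^sub>m l * v) $$ (r, t))"
    if r: "r < n" for r
  proof -
    have "(\<Sum>p<n. A $$ (r, p) * w p)
        = (\<Sum>l<k. \<Sum>t<m. d l t * (\<Sum>p<n. A $$ (r, p) * (A ^\<^sub>m l * v) $$ (p, t)))"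
    proof -
      have "(\<Sum>p<n. A $$ (r, p) * w p)
          = (\<Sum>p<n. \<Sum>l<k. \<Sum>t<m. A $$ (r, p) * (d l t * (A ^\<^sub>m l * v) $$ (p, t)))"
        by (simp add: d sum_distrib_left)
      also have "\<dots> = (\<Sum>l<k. \<Sum>p<n. \<Sum>t<m. A $$ (r, p) * (d l t * (A ^\<^sub>m l * v) $$ (p, t)))"
        by (rule sum.swap)
      also have "\<dots> = (\<Sum>l<k. \<Sum>t<m. \<Sum>p<n. A $$ (r, p) * (d l t * (A ^\<^sub>m l * v) $$ (p, t)))"
        by (intro sum.cong refl sum.swap)
      finally show ?thesis by (simp add: sum_distrib_left mult.left_commute[of "A $$ (r, _)"])
    qed
    also have "\<dots> = (\<Sum>l<k. \<Sum>t<m. d l t * (A ^\<^sub>m Suc l * v) $$ (r, t))"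
    proof -
      have "(A ^\<^sub>m Suc l * v) $$ (r, t) = (\<Sum>p<n. A $$ (r, p) * (A ^\<^sub>m l * v) $$ (p, t))"
        if "t < m" for l t
        unfolding pow_mat_Suc_mult_left[OF A v] using A v r that by (intro index_mult_mat_sum) auto
      then show ?thesis by (intro sum.cong refl) simp
    qed
    also have "\<dots> = (\<Sum>l<Suc k. \<Sum>t<m. d' l t * (A ^\<^sub>m l * v) $$ (r, t))"
      by (subst sum.lessThan_Suc_shift) (simp add: d'_def del: pow_mat.simps)
    finally show ?thesis .
  qed
  then show ?thesis unfolding in_krylov_span_def by blast
qed

lemma in_krylov_span_pow_perturbed:
  fixes A v x :: "'a :: comm_ring_1 mat"
  assumes A: "A \<in> carrier_mat n n" and v: "v \<in> carrier_mat n m" and x: "x \<in> carrier_mat m n"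
    and s: "s < m"
  shows "in_krylov_span n m A v k
    (\<lambda>r. ((A - v * x + c \<cdot>\<^sub>m 1\<^sub>m n) ^\<^sub>m k * v) $$ (r, s) - (A ^\<^sub>m k * v) $$ (r, s))"
  using s
proof (induction k arbitrary: s)
  case 0
  then show ?case using A v x unfolding in_krylov_span_def by simp
next
  case (Suc k)
  define A' where "A' = A - v * x + c \<cdot>\<^sub>m 1\<^sub>m n"
  define Y where "Y = A' ^\<^sub>m k * v"
  define Z where "Z = A ^\<^sub>m k * v"
  have A': "A' \<in> carrier_mat n n" unfolding A'_def using A v x by auto
  have Y: "Y \<in> carrier_mat n m" and Z: "Z \<in> carrier_mat n m"
    unfolding Y_def Z_def using A A' v by auto
  have IH: "in_krylov_span n m A v k (\<lambda>r. Y $$ (r, s) - Z $$ (r, s))"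
    using Suc unfolding Y_def Z_def A'_def by blast
  have "A' * Y = (A - v * x) * Y + (c \<cdot>\<^sub>m 1\<^sub>m n) * Y"
    unfolding A'_def using A v x Y by (intro add_mult_distrib_mat[of _ n n]) auto
  also have "\<dots> = A * Y - v * (x * Y) + c \<cdot>\<^sub>m Y"
    using A v x Y by (simp add: minus_mult_distrib_mat[of _ n n] mult_smult_assoc_mat[of _ n n])
  finally have A'_Y: "A' * Y = A * Y - v * (x * Y) + c \<cdot>\<^sub>m Y" .
  have diff: "(A' ^\<^sub>m Suc k * v) $$ (r, s) - (A ^\<^sub>m Suc k * v) $$ (r, s)
      = (\<Sum>p<n. A $$ (r, p) * (Y $$ (p, s) - Z $$ (p, s)))
        + (\<Sum>t<m. - (x * Y) $$ (t, s) * (A ^\<^sub>m 0 * v) $$ (r, t))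
        + c * (Y $$ (r, s) - Z $$ (r, s)) + c * Z $$ (r, s)"
    if r: "r < n" for r
  proof -
    have xY: "x * Y \<in> carrier_mat m m" using x Y by simp
    have "(A' ^\<^sub>m Suc k * v) $$ (r, s) = (A' * Y) $$ (r, s)"
      unfolding pow_mat_Suc_mult_left[OF A' v, of k, folded Y_def] ..
    also have "\<dots> = (A * Y) $$ (r, s) - (v * (x * Y)) $$ (r, s) + c * Y $$ (r, s)"
      unfolding A'_Y using A v Y xY r Suc.prems by (simp del: index_mult_mat(1))
    finally have A'_entry: "(A' ^\<^sub>m Suc k * v) $$ (r, s)
        = (A * Y) $$ (r, s) - (v * (x * Y)) $$ (r, s) + c * Y $$ (r, s)" .
    have A_entry: "(A ^\<^sub>m Suc k * v) $$ (r, s) = (A * Z) $$ (r, s)"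
      unfolding pow_mat_Suc_mult_left[OF A v, of k, folded Z_def] ..
    have "(A * Y) $$ (r, s) - (A * Z) $$ (r, s) = (\<Sum>p<n. A $$ (r, p) * (Y $$ (p, s) - Z $$ (p, s)))"
      unfolding index_mult_mat_sum[OF A Y r Suc.prems] index_mult_mat_sum[OF A Z r Suc.prems]
      by (simp add: sum_subtractf right_diff_distrib)
    moreover have "(v * (x * Y)) $$ (r, s) = - (\<Sum>t<m. - (x * Y) $$ (t, s) * (A ^\<^sub>m 0 * v) $$ (r, t))"
    proof -
      have "A ^\<^sub>m 0 * v = v" using A v by simp
      then show ?thesis
        unfolding index_mult_mat_sum[OF v xY r Suc.prems] by (simp add: sum_negf mult.commute)
    qed
    ultimately show ?thesis unfolding A'_entry A_entry by (simp add: algebra_simps)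
  qed
  have span: "in_krylov_span n m A v (Suc k) (\<lambda>r.
      (\<Sum>p<n. A $$ (r, p) * (Y $$ (p, s) - Z $$ (p, s)))
        + (\<Sum>t<m. - (x * Y) $$ (t, s) * (A ^\<^sub>m 0 * v) $$ (r, t))
        + c * (Y $$ (r, s) - Z $$ (r, s)) + c * Z $$ (r, s))"
  proof -
    have "in_krylov_span n m A v (Suc k) (\<lambda>r. \<Sum>p<n. A $$ (r, p) * (Y $$ (p, s) - Z $$ (p, s)))"
      by (rule in_krylov_span_mult[OF A v IH])
    moreover have "in_krylov_span n m A v (Suc k)
        (\<lambda>r. \<Sum>t<m. - (x * Y) $$ (t, s) * (A ^\<^sub>m 0 * v) $$ (r, t))"
      by (rule in_krylov_span_combination_of_columns) simp
    moreover have "in_krylov_span n m A v (Suc k) (\<lambda>r. c * (Y $$ (r, s) - Z $$ (r, s)))"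
      by (rule in_krylov_span_mono[OF in_krylov_span_smult[OF IH]]) simp
    moreover have "in_krylov_span n m A v (Suc k) (\<lambda>r. c * Z $$ (r, s))"
      unfolding Z_def by (intro in_krylov_span_smult in_krylov_span_column Suc.prems) simp
    ultimately show ?thesis by (intro in_krylov_span_add) assumption+
  qed
  show ?case
    by (rule in_krylov_span_cong[OF span]) (use diff in \<open>simp only: A'_def\<close>)
qed

lemma det_pow_perturbed_block_columns:
  fixes A v x :: "'a :: comm_ring_1 mat"
  assumes A: "A \<in> carrier_mat n n" and v: "v \<in> carrier_mat n m" and x: "x \<in> carrier_mat m n"
    and deg: "\<And>j. j < n \<Longrightarrow> deg j * m \<le> j" and sel: "\<And>j. j < n \<Longrightarrow> sel j < m"
    and krylov: "\<And>i j. j < n \<Longrightarrow> i < deg j * m \<Longrightarrow> deg i = i div m \<and> sel i = i mod m"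
  shows "det (mat n n (\<lambda>(r, j). ((A - v * x + c \<cdot>\<^sub>m 1\<^sub>m n) ^\<^sub>m deg j * v) $$ (r, sel j)))
       = det (mat n n (\<lambda>(r, j). (A ^\<^sub>m deg j * v) $$ (r, sel j)))"
    (is "det ?M' = det ?M")
proof (rule det_add_earlier_columns)
  fix j assume j: "j < n"
  obtain d where d: "\<And>r. r < n \<Longrightarrow>
      ((A - v * x + c \<cdot>\<^sub>m 1\<^sub>m n) ^\<^sub>m deg j * v) $$ (r, sel j) - (A ^\<^sub>m deg j * v) $$ (r, sel j)
      = (\<Sum>l<deg j. \<Sum>t<m. d l t * (A ^\<^sub>m l * v) $$ (r, t))"
    using in_krylov_span_pow_perturbed[OF A v x sel[OF j], of "deg j" c]
    unfolding in_krylov_span_def by blast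
  define a where "a i = (if i < deg j * m then d (i div m) (i mod m) else 0)" for i
  have "(\<Sum>i<j. a i * ?M $$ (r, i)) = (\<Sum>l<deg j. \<Sum>t<m. d l t * (A ^\<^sub>m l * v) $$ (r, t))"
    if r: "r < n" for r
  proof -
    have "(\<Sum>i<j. a i * ?M $$ (r, i)) = (\<Sum>i<deg j * m. a i * ?M $$ (r, i))"
      using deg[OF j] by (intro sum.mono_neutral_right) (auto simp: a_def)
    also have "\<dots> = (\<Sum>i<deg j * m. d (i div m) (i mod m) * (A ^\<^sub>m (i div m) * v) $$ (r, i mod m))"
      using deg[OF j] j r krylov[OF j] by (intro sum.cong refl) (simp add: a_def)
    also have "\<dots> = (\<Sum>l<deg j. \<Sum>t<m. d l t * (A ^\<^sub>m l * v) $$ (r, t))"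
      by (rule sum_lessThan_mult_div_mod)
    finally show ?thesis .
  qed
  then show "\<exists>a. \<forall>r<n. ?M' $$ (r, j) = ?M $$ (r, j) + (\<Sum>i<j. a i * ?M $$ (r, i))"
    using d j by (intro exI[of _ a]) (simp add: algebra_simps)
qed auto

definition block_power :: "nat \<Rightarrow> nat \<Rightarrow> nat \<Rightarrow> nat" where
  "block_power m q j = (if j < q * m then j div m else q)"

definition block_column :: "nat \<Rightarrow> nat \<Rightarrow> nat set \<Rightarrow> nat \<Rightarrow> nat" where
  "block_column m q I j = (if j < q * m then j mod m else sorted_list_of_set I ! (j - q * m))"

lemma F_I_eq_det_block_columns:
  "F_I n m q I (B, v)
     = det (mat n n (\<lambda>(r, j). (B ^\<^sub>m block_power m q j * v) $$ (r, block_column m q I j)))"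
  unfolding F_I_def block_power_def block_column_def by (auto intro!: arg_cong[where f = det] cong_mat)

lemma block_power_mult_le: "block_power m q j * m \<le> j"
  unfolding block_power_def by (simp add: div_times_less_eq_dividend)

lemma block_column_less:
  assumes "j < q * m + card I" "I \<subseteq> {0..<m}"
  shows "block_column m q I j < m"
proof (cases "j < q * m")
  case True
  then have "0 < m" by (cases m) auto
  with True show ?thesis unfolding block_column_def by simp
next
  case False
  have "finite I" using assms(2) finite_subset by blast
  moreover have "j - q * m < length (sorted_list_of_set I)" using False assms(1) by simp
  ultimately have "sorted_list_of_set I ! (j - q * m) \<in> I"
    using nth_mem set_sorted_list_of_set by blast
  with False assms(2) show ?thesis unfolding block_column_def by auto
qed

lemma block_power_block_column_below:
  assumes "i < block_power m q j * m"
  shows "block_power m q i = i div m \<and> block_column m q I i = i mod m"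
proof -
  have "block_power m q j \<le> q"
    unfolding block_power_def by (simp add: less_mult_imp_div_less less_imp_le)
  then have "i < q * m" using assms by (meson less_le_trans mult_le_mono1)
  then show ?thesis unfolding block_power_def block_column_def by simp
qed

theorem lemma4p2:
  fixes n m q r :: nat and I :: "nat set"
  assumes "n \<ge> 2" and "1 \<le> m" and "m < n"
    and "n = q * m + r" and "q \<ge> 1" and "0 < r" and "r \<le> m"
    and "I \<subseteq> {0..<m}" and "card I = r"
  shows "\<forall>A \<in> sl n. \<forall>v \<in> carrier_mat n m. \<forall>x \<in> carrier_mat m n.
           F_I n m q I (coadj_exp_V n x (A, v)) = F_I n m q I (A, v)"
proof (intro ballI)
  fix A v x :: "complex mat"
  assume "A \<in> sl n" and v: "v \<in> carrier_mat n m" and x: "x \<in> carrier_mat m n"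
  then have A: "A \<in> carrier_mat n n" unfolding sl_def by simp
  have "block_column m q I j < m" if "j < n" for j
    using that assms(4,8,9) by (intro block_column_less) simp_all
  then show "F_I n m q I (coadj_exp_V n x (A, v)) = F_I n m q I (A, v)"
    unfolding coadj_exp_V_def prod.case F_I_eq_det_block_columns
    by (intro det_pow_perturbed_block_columns[OF A v x] block_power_mult_le
        block_power_block_column_below)
qed

end
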